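(* Let $a^1,\dots,a^N\in\mathbb{R}^{V_+}$ and $h\in\mathbb{R}$, and let $$\mathcal{H}=\Big\{(\theta,y)\in\mathbb{R}^{V_+}_{\ge0}\times\mathbb{R}^{[N]\times V_+}_{\ge0}:\ \sum_{\xi\in[N]}(a^\xi)^\top y^\xi\ge h,\ \ \theta_v\ge\sum_{\xi\in[N]}p_\xi w_vy^\xi_v\ \forall v\in V_+\Big\}.$$ Then: if there exist $v\in V_+$ and $\xi\in[N]$ with $w_v=0$ and $a^\xi_v>0$, the projection of $\mathcal{H}$ onto $\theta$ is $\mathbb{R}^{V_+}_{\ge0}$; otherwise the projection of $\mathcal{H}$ onto $\theta$ equals $$\Big\{\theta\in\mathbb{R}^{V_+}_{\ge0}:\ \sum_{v\in V_+:\,w_v>0}\Big(\max_{\xi\in[N]}\frac{a^\xi_v}{p_\xi w_v}\Big)^+\theta_v\ge h\Big\}.$$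
   Context: $V_+$ is a finite set (customers); $N$ is a positive integer; $p_\xi\in[0,1]$ for $\xi\in[N]$ with $\sum_\xi p_\xi=1$ are scenario probabilities; $w\in\mathbb{Q}^{V_+}_{\ge0}$ is a fixed weight vector. Vectors $y\in\mathbb{R}^{[N]\times V_+}$ have entries $y^\xi_v$, and $y^\xi\in\mathbb{R}^{V_+}$ is the restriction to scenario $\xi$. $(a)^+=\max\{a,0\}$. *)

theory Defs
  imports "HOL-Library.FuncSet" Complex_Main
begin

definition setH ::
  "'v set \<Rightarrow> nat \<Rightarrow> (nat \<Rightarrow> real) \<Rightarrow> ('v \<Rightarrow> real) \<Rightarrow> (nat \<Rightarrow> 'v \<Rightarrow> real) \<Rightarrow> real
   \<Rightarrow> (('v \<Rightarrow> real) \<times> (nat \<times> 'v \<Rightarrow> real)) set" where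
  "setH V N p w a h =
     {(\<theta>, y). \<theta> \<in> V \<rightarrow>\<^sub>E {0..} \<and> y \<in> ({1..N} \<times> V) \<rightarrow>\<^sub>E {0..} \<and>
        (\<Sum>\<xi>\<in>{1..N}. \<Sum>v\<in>V. a \<xi> v * y (\<xi>, v)) \<ge> h \<and>
        (\<forall>v\<in>V. \<theta> v \<ge> (\<Sum>\<xi>\<in>{1..N}. p \<xi> * w v * y (\<xi>, v)))}"

definition proj_theta :: "(('v \<Rightarrow> real) \<times> (nat \<times> 'v \<Rightarrow> real)) set \<Rightarrow> ('v \<Rightarrow> real) set" where
  "proj_theta S = fst ` S"

end

theory Submission
  imports Defs
begin

text \<open>The constraints of \<open>\<H>\<close> decouple over customers once \<open>\<theta>\<close> is fixed: customer \<open>v\<close>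
contributes \<open>\<Sum>\<^sub>\<xi> a\<^sup>\<xi>\<^sub>v y\<^sup>\<xi>\<^sub>v\<close> to the coverage constraint subject only to the budget
\<open>\<Sum>\<^sub>\<xi> p\<^sub>\<xi> w\<^sub>v y\<^sup>\<xi>\<^sub>v \<le> \<theta>\<^sub>v\<close>. For \<open>w\<^sub>v > 0\<close> this is a one-constraint knapsack LP whose optimum is
the best ratio \<open>(max\<^sub>\<xi> a\<^sup>\<xi>\<^sub>v / (p\<^sub>\<xi> w\<^sub>v))\<^sup>+\<close> times \<open>\<theta>\<^sub>v\<close>, attained by spending the whole budget
on one best scenario. For \<open>w\<^sub>v = 0\<close> the budget is void, so the contribution is unbounded if
some \<open>a\<^sup>\<xi>\<^sub>v > 0\<close> and at most \<open>0\<close> otherwise.\<close>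

definition pos_max_ratio :: "('i \<Rightarrow> real) \<Rightarrow> ('i \<Rightarrow> real) \<Rightarrow> 'i set \<Rightarrow> real" where
  "pos_max_ratio a c I = max (Max ((\<lambda>i. a i / c i) ` I)) 0"

lemma pos_max_ratio_nonneg: "0 \<le> pos_max_ratio a c I"
  by (simp add: pos_max_ratio_def)

lemma sum_mult_le_pos_max_ratio:
  fixes a c y :: "'i \<Rightarrow> real"
  assumes "finite I" and "\<forall>i\<in>I. 0 < c i" and "\<forall>i\<in>I. 0 \<le> y i"
  shows "(\<Sum>i\<in>I. a i * y i) \<le> pos_max_ratio a c I * (\<Sum>i\<in>I. c i * y i)"
  unfolding sum_distrib_left
proof (rule sum_mono)
  fix i assume i: "i \<in> I"
  have "a i / c i \<le> pos_max_ratio a c I"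
    using assms(1) i unfolding pos_max_ratio_def by (simp add: le_max_iff_disj)
  then have "a i \<le> pos_max_ratio a c I * c i"
    using assms(2) i by (simp add: pos_divide_le_eq)
  then show "a i * y i \<le> pos_max_ratio a c I * (c i * y i)"
    using assms(3) i by (metis mult.assoc mult_right_mono)
qed

lemma pos_max_ratio_attained:
  fixes a c :: "'i \<Rightarrow> real"
  assumes "finite I" and "I \<noteq> {}" and "\<forall>i\<in>I. 0 < c i" and "0 \<le> t"
  obtains y where "\<forall>i\<in>I. 0 \<le> y i" and "(\<Sum>i\<in>I. c i * y i) \<le> t"
    and "(\<Sum>i\<in>I. a i * y i) = pos_max_ratio a c I * t"
proof (cases "Max ((\<lambda>i. a i / c i) ` I) \<le> 0")
  case True
  then have "pos_max_ratio a c I = 0" by (simp add: pos_max_ratio_def)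
  with that[of "\<lambda>_. 0"] assms(4) show ?thesis by simp
next
  case False
  have "Max ((\<lambda>i. a i / c i) ` I) \<in> (\<lambda>i. a i / c i) ` I"
    using assms(1,2) by (intro Max_in) auto
  then obtain j where j: "j \<in> I" and max_j: "Max ((\<lambda>i. a i / c i) ` I) = a j / c j"
    by blast
  have "c j > 0" using assms(3) j by blast
  let ?y = "\<lambda>i. if i = j then t / c j else 0"
  have sum_y: "(\<Sum>i\<in>I. f i * ?y i) = f j * (t / c j)" for f :: "'i \<Rightarrow> real"
  proof -
    have "(\<Sum>i\<in>I. f i * ?y i) = (\<Sum>i\<in>I. if i = j then f j * (t / c j) else 0)"
      by (rule sum.cong) auto
    then show ?thesis using assms(1) j by simp
  qed
  have "(\<Sum>i\<in>I. c i * ?y i) = t" and "(\<Sum>i\<in>I. a i * ?y i) = a j / c j * t"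
    using sum_y[of c] sum_y[of a] \<open>c j > 0\<close> by simp_all
  moreover have "pos_max_ratio a c I = a j / c j"
    using False max_j by (simp add: pos_max_ratio_def)
  ultimately show ?thesis
    using that[of ?y] assms(4) \<open>c j > 0\<close> by simp
qed

lemma scaled_budget_sum_le:
  fixes a p z :: "'i \<Rightarrow> real"
  assumes "finite I" and "\<forall>i\<in>I. 0 < p i" and "0 \<le> \<omega>" and "\<omega> = 0 \<Longrightarrow> \<forall>i\<in>I. a i \<le> 0"
    and "\<forall>i\<in>I. 0 \<le> z i" and "(\<Sum>i\<in>I. p i * \<omega> * z i) \<le> t"
  shows "(\<Sum>i\<in>I. a i * z i) \<le> (if 0 < \<omega> then pos_max_ratio a (\<lambda>i. p i * \<omega>) I * t else 0)"
proof (cases "0 < \<omega>")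
  case True
  then have "(\<Sum>i\<in>I. a i * z i) \<le> pos_max_ratio a (\<lambda>i. p i * \<omega>) I * (\<Sum>i\<in>I. p i * \<omega> * z i)"
    using assms(1,2,5) by (intro sum_mult_le_pos_max_ratio) auto
  also have "\<dots> \<le> pos_max_ratio a (\<lambda>i. p i * \<omega>) I * t"
    using assms(6) by (simp add: mult_left_mono pos_max_ratio_nonneg)
  finally show ?thesis using True by simp
next
  case False
  then have "\<forall>i\<in>I. a i \<le> 0" using assms(3,4) by simp
  then show ?thesis
    using False assms(5) by (simp add: sum_nonpos mult_nonpos_nonneg)
qed

lemma scaled_budget_sum_attained:
  fixes a p :: "'i \<Rightarrow> real"
  assumes "finite I" and "I \<noteq> {}" and "\<forall>i\<in>I. 0 < p i" and "0 \<le> t"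
  obtains z where "\<forall>i\<in>I. 0 \<le> z i" and "(\<Sum>i\<in>I. p i * \<omega> * z i) \<le> t"
    and "(\<Sum>i\<in>I. a i * z i) = (if 0 < \<omega> then pos_max_ratio a (\<lambda>i. p i * \<omega>) I * t else 0)"
proof (cases "0 < \<omega>")
  case True
  with assms obtain z where "\<forall>i\<in>I. 0 \<le> z i" "(\<Sum>i\<in>I. p i * \<omega> * z i) \<le> t"
      "(\<Sum>i\<in>I. a i * z i) = pos_max_ratio a (\<lambda>i. p i * \<omega>) I * t"
    by (elim pos_max_ratio_attained[of I "\<lambda>i. p i * \<omega>"]) auto
  with True that show ?thesis by simp
next
  case False
  with that[of "\<lambda>_. 0"] assms(4) show ?thesis by simp
qed

text \<open>The witness need not be extensional: it can always be restricted to \<open>{1..N} \<times> V\<close>.\<close>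

lemma mem_proj_setH_iff:
  "\<theta> \<in> proj_theta (setH V N p w a h) \<longleftrightarrow>
     \<theta> \<in> V \<rightarrow>\<^sub>E {0..} \<and>
     (\<exists>Y. (\<forall>v\<in>V. \<forall>\<xi>\<in>{1..N}. 0 \<le> Y v \<xi>) \<and>
          (\<forall>v\<in>V. (\<Sum>\<xi>\<in>{1..N}. p \<xi> * w v * Y v \<xi>) \<le> \<theta> v) \<and>
          h \<le> (\<Sum>v\<in>V. \<Sum>\<xi>\<in>{1..N}. a \<xi> v * Y v \<xi>))"
proof
  assume "\<theta> \<in> proj_theta (setH V N p w a h)"
  then obtain y where "(\<theta>, y) \<in> setH V N p w a h"
    unfolding proj_theta_def by auto
  moreover have "(\<Sum>\<xi>\<in>{1..N}. \<Sum>v\<in>V. a \<xi> v * y (\<xi>, v)) = (\<Sum>v\<in>V. \<Sum>\<xi>\<in>{1..N}. a \<xi> v * y (\<xi>, v))"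
    by (rule sum.swap)
  ultimately show "\<theta> \<in> V \<rightarrow>\<^sub>E {0..} \<and> (\<exists>Y. (\<forall>v\<in>V. \<forall>\<xi>\<in>{1..N}. 0 \<le> Y v \<xi>) \<and>
          (\<forall>v\<in>V. (\<Sum>\<xi>\<in>{1..N}. p \<xi> * w v * Y v \<xi>) \<le> \<theta> v) \<and>
          h \<le> (\<Sum>v\<in>V. \<Sum>\<xi>\<in>{1..N}. a \<xi> v * Y v \<xi>))"
    unfolding setH_def by (intro conjI exI[of _ "\<lambda>v \<xi>. y (\<xi>, v)"]) auto
next
  assume "\<theta> \<in> V \<rightarrow>\<^sub>E {0..} \<and> (\<exists>Y. (\<forall>v\<in>V. \<forall>\<xi>\<in>{1..N}. 0 \<le> Y v \<xi>) \<and>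
          (\<forall>v\<in>V. (\<Sum>\<xi>\<in>{1..N}. p \<xi> * w v * Y v \<xi>) \<le> \<theta> v) \<and>
          h \<le> (\<Sum>v\<in>V. \<Sum>\<xi>\<in>{1..N}. a \<xi> v * Y v \<xi>))"
  then obtain Y where \<theta>: "\<theta> \<in> V \<rightarrow>\<^sub>E {0..}" and Y_nonneg: "\<forall>v\<in>V. \<forall>\<xi>\<in>{1..N}. 0 \<le> Y v \<xi>"
    and budget: "\<forall>v\<in>V. (\<Sum>\<xi>\<in>{1..N}. p \<xi> * w v * Y v \<xi>) \<le> \<theta> v"
    and cover: "h \<le> (\<Sum>v\<in>V. \<Sum>\<xi>\<in>{1..N}. a \<xi> v * Y v \<xi>)"
    by blast
  define y where "y = restrict (\<lambda>(\<xi>, v). Y v \<xi>) ({1..N} \<times> V)"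
  have y_eq: "y (\<xi>, v) = Y v \<xi>" if "\<xi> \<in> {1..N}" "v \<in> V" for \<xi> v
    using that by (simp add: y_def)
  have "(\<Sum>\<xi>\<in>{1..N}. \<Sum>v\<in>V. a \<xi> v * y (\<xi>, v)) = (\<Sum>v\<in>V. \<Sum>\<xi>\<in>{1..N}. a \<xi> v * Y v \<xi>)"
    by (subst sum.swap) (simp add: y_eq)
  moreover have "(\<Sum>\<xi>\<in>{1..N}. p \<xi> * w v * y (\<xi>, v)) = (\<Sum>\<xi>\<in>{1..N}. p \<xi> * w v * Y v \<xi>)"
    if "v \<in> V" for v
    using that by (simp add: y_eq)
  moreover have "y \<in> ({1..N} \<times> V) \<rightarrow>\<^sub>E {0..}"
    using Y_nonneg by (auto simp: y_def)
  ultimately have "(\<theta>, y) \<in> setH V N p w a h"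
    using \<theta> budget cover unfolding setH_def by auto
  then show "\<theta> \<in> proj_theta (setH V N p w a h)"
    unfolding proj_theta_def by force
qed

lemma proj_setH_unbounded:
  assumes "finite V" and "v\<^sub>0 \<in> V" and "\<xi>\<^sub>0 \<in> {1..N}" and "w v\<^sub>0 = 0" and "0 < a \<xi>\<^sub>0 v\<^sub>0"
  shows "proj_theta (setH V N p w a h) = V \<rightarrow>\<^sub>E {0..}"
proof
  show "proj_theta (setH V N p w a h) \<subseteq> V \<rightarrow>\<^sub>E {0..}"
    by (auto simp: mem_proj_setH_iff)
next
  show "V \<rightarrow>\<^sub>E {0..} \<subseteq> proj_theta (setH V N p w a h)"
  proof
    fix \<theta> :: "'a \<Rightarrow> real" assume \<theta>: "\<theta> \<in> V \<rightarrow>\<^sub>E {0..}"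
    define M where "M = max 0 h / a \<xi>\<^sub>0 v\<^sub>0"
    define Y where "Y v \<xi> = (if v = v\<^sub>0 \<and> \<xi> = \<xi>\<^sub>0 then M else 0)" for v \<xi>
    have "M \<ge> 0" using assms(5) by (simp add: M_def)
    have budget: "(\<Sum>\<xi>\<in>{1..N}. p \<xi> * w v * Y v \<xi>) = 0" for v
      using assms(4) by (cases "v = v\<^sub>0") (simp_all add: Y_def)
    have "(\<Sum>\<xi>\<in>{1..N}. a \<xi> v * Y v \<xi>) = (if v = v\<^sub>0 then max 0 h else 0)" for v
      using assms(3,5) by (cases "v = v\<^sub>0") (simp_all add: Y_def M_def if_distrib[of "(*) _"] sum.delta cong: if_cong)
    then have cover: "(\<Sum>v\<in>V. \<Sum>\<xi>\<in>{1..N}. a \<xi> v * Y v \<xi>) = max 0 h"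
      using assms(1,2) by simp
    show "\<theta> \<in> proj_theta (setH V N p w a h)"
      using \<theta> \<open>M \<ge> 0\<close> budget cover unfolding mem_proj_setH_iff
      by (intro conjI exI[of _ Y]) (auto simp: Y_def)
  qed
qed

lemma coverage_bound_if_mem_proj_setH:
  assumes "finite V" and "\<forall>\<xi>\<in>{1..N}. 0 < p \<xi>" and "\<forall>v\<in>V. 0 \<le> w v"
    and "\<forall>v\<in>V. w v = 0 \<longrightarrow> (\<forall>\<xi>\<in>{1..N}. a \<xi> v \<le> 0)"
    and "\<theta> \<in> proj_theta (setH V N p w a h)"
  shows "h \<le> (\<Sum>v\<in>{v\<in>V. 0 < w v}. pos_max_ratio (\<lambda>\<xi>. a \<xi> v) (\<lambda>\<xi>. p \<xi> * w v) {1..N} * \<theta> v)"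
    (is "_ \<le> (\<Sum>v\<in>_. ?r v * \<theta> v)")
proof -
  obtain Y where Y_nonneg: "\<forall>v\<in>V. \<forall>\<xi>\<in>{1..N}. 0 \<le> Y v \<xi>"
    and budget: "\<forall>v\<in>V. (\<Sum>\<xi>\<in>{1..N}. p \<xi> * w v * Y v \<xi>) \<le> \<theta> v"
    and cover: "h \<le> (\<Sum>v\<in>V. \<Sum>\<xi>\<in>{1..N}. a \<xi> v * Y v \<xi>)"
    using assms(5) unfolding mem_proj_setH_iff by blast
  have "(\<Sum>\<xi>\<in>{1..N}. a \<xi> v * Y v \<xi>) \<le> (if 0 < w v then ?r v * \<theta> v else 0)" if "v \<in> V" for v
    by (rule scaled_budget_sum_le) (use assms(2-4) Y_nonneg budget that in auto)
  then have "(\<Sum>v\<in>V. \<Sum>\<xi>\<in>{1..N}. a \<xi> v * Y v \<xi>) \<le> (\<Sum>v\<in>V. if 0 < w v then ?r v * \<theta> v else 0)"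
    by (rule sum_mono)
  also have "\<dots> = (\<Sum>v\<in>{v\<in>V. 0 < w v}. ?r v * \<theta> v)"
    using assms(1) by (rule sum.inter_filter[symmetric])
  finally show ?thesis using cover by linarith
qed

lemma mem_proj_setH_if_coverage_bound:
  assumes "finite V" and "0 < N" and "\<forall>\<xi>\<in>{1..N}. 0 < p \<xi>" and "\<theta> \<in> V \<rightarrow>\<^sub>E {0..}"
    and "h \<le> (\<Sum>v\<in>{v\<in>V. 0 < w v}. pos_max_ratio (\<lambda>\<xi>. a \<xi> v) (\<lambda>\<xi>. p \<xi> * w v) {1..N} * \<theta> v)"
  shows "\<theta> \<in> proj_theta (setH V N p w a h)"
proof -
  let ?r = "\<lambda>v. pos_max_ratio (\<lambda>\<xi>. a \<xi> v) (\<lambda>\<xi>. p \<xi> * w v) {1..N}"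
  let ?optimal = "\<lambda>v z. (\<forall>\<xi>\<in>{1..N}. 0 \<le> z \<xi>) \<and> (\<Sum>\<xi>\<in>{1..N}. p \<xi> * w v * z \<xi>) \<le> \<theta> v \<and>
      (\<Sum>\<xi>\<in>{1..N}. a \<xi> v * z \<xi>) = (if 0 < w v then ?r v * \<theta> v else 0)"
  have "\<exists>z. ?optimal v z" if "v \<in> V" for v
  proof -
    have "0 \<le> \<theta> v" using assms(4) that by auto
    obtain z where "?optimal v z"
      by (rule scaled_budget_sum_attained[where I = "{1..N}" and a = "\<lambda>\<xi>. a \<xi> v" and \<omega> = "w v"])
        (use assms(2,3) \<open>0 \<le> \<theta> v\<close> in auto)
    then show ?thesis by blast
  qed
  then obtain Y where Y: "\<forall>v\<in>V. ?optimal v (Y v)"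
    using bchoice[of V ?optimal] by blast
  note assms(5)
  also have "(\<Sum>v\<in>{v\<in>V. 0 < w v}. ?r v * \<theta> v) = (\<Sum>v\<in>V. if 0 < w v then ?r v * \<theta> v else 0)"
    using assms(1) by (rule sum.inter_filter)
  also have "\<dots> = (\<Sum>v\<in>V. \<Sum>\<xi>\<in>{1..N}. a \<xi> v * Y v \<xi>)"
    using Y by (intro sum.cong) auto
  finally show ?thesis
    using assms(4) Y unfolding mem_proj_setH_iff by blast
qed

lemma proj_setH_eq:
  assumes "finite V" and "0 < N" and "\<forall>\<xi>\<in>{1..N}. 0 < p \<xi>" and "\<forall>v\<in>V. 0 \<le> w v"
    and "\<forall>v\<in>V. w v = 0 \<longrightarrow> (\<forall>\<xi>\<in>{1..N}. a \<xi> v \<le> 0)"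
  shows "proj_theta (setH V N p w a h) =
    {\<theta> \<in> V \<rightarrow>\<^sub>E {0..}.
       h \<le> (\<Sum>v\<in>{v\<in>V. 0 < w v}. pos_max_ratio (\<lambda>\<xi>. a \<xi> v) (\<lambda>\<xi>. p \<xi> * w v) {1..N} * \<theta> v)}"
  using coverage_bound_if_mem_proj_setH[OF assms(1,3-5)] mem_proj_setH_if_coverage_bound[OF assms(1-3)]
  by (auto simp: mem_proj_setH_iff)

theorem lemma5:
  fixes V :: "'v set" and N :: nat and p :: "nat \<Rightarrow> real" and w :: "'v \<Rightarrow> real"
    and a :: "nat \<Rightarrow> 'v \<Rightarrow> real" and h :: real
  assumes "finite V" and "N > 0"
    and "\<forall>\<xi>\<in>{1..N}. 0 < p \<xi> \<and> p \<xi> \<le> 1"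
    and "(\<Sum>\<xi>\<in>{1..N}. p \<xi>) = 1"
    and "\<forall>v\<in>V. w v \<in> \<rat> \<and> w v \<ge> 0"
  shows "((\<exists>v\<in>V. \<exists>\<xi>\<in>{1..N}. w v = 0 \<and> a \<xi> v > 0) \<longrightarrow>
            proj_theta (setH V N p w a h) = V \<rightarrow>\<^sub>E {0..})
       \<and> (\<not> (\<exists>v\<in>V. \<exists>\<xi>\<in>{1..N}. w v = 0 \<and> a \<xi> v > 0) \<longrightarrow>
            proj_theta (setH V N p w a h) =
              {\<theta> \<in> V \<rightarrow>\<^sub>E {0..}.
                 (\<Sum>v\<in>{v\<in>V. w v > 0}.
                    max (Max ((\<lambda>\<xi>. a \<xi> v / (p \<xi> * w v)) ` {1..N})) 0 * \<theta> v) \<ge> h})"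
proof (intro conjI impI)
  assume "\<exists>v\<in>V. \<exists>\<xi>\<in>{1..N}. w v = 0 \<and> a \<xi> v > 0"
  then show "proj_theta (setH V N p w a h) = V \<rightarrow>\<^sub>E {0..}"
    using proj_setH_unbounded[OF assms(1)] by blast
next
  assume "\<not> (\<exists>v\<in>V. \<exists>\<xi>\<in>{1..N}. w v = 0 \<and> a \<xi> v > 0)"
  then have "\<forall>v\<in>V. w v = 0 \<longrightarrow> (\<forall>\<xi>\<in>{1..N}. a \<xi> v \<le> 0)"
    by (auto simp: not_less)
  with assms(1-3,5) show "proj_theta (setH V N p w a h) =
      {\<theta> \<in> V \<rightarrow>\<^sub>E {0..}.
         (\<Sum>v\<in>{v\<in>V. w v > 0}.
            max (Max ((\<lambda>\<xi>. a \<xi> v / (p \<xi> * w v)) ` {1..N})) 0 * \<theta> v) \<ge> h}"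
    unfolding pos_max_ratio_def[symmetric] by (intro proj_setH_eq) auto
qed

end
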